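(* Fix a protocol specification $(I,D,C)$ and a setting $(n,r,f)$ with $r\ge 2$, and suppose the setting is feasible, i.e. there exists a correct state machine. Let $\mathit{Sc}$ be a scenario that leads to a definite decision, with definite final-state vector $(d_1,\dots,d_n)\in D^n$. Let $M$ be any state machine whose execution on $\mathit{Sc}$ ends with process $i$ in final state $d_i$ for every $i$, and let $T$ be a set of transitions $(t,i,x)\mapsto y$ that are applied in this execution of $M$ on $\mathit{Sc}$ (meaning: in round $t$, process $i$ has input vector $x$ and $M(t,i,x)=y$), such that for each pair $(t,i)\in\{1,\dots,r\}\times\{1,\dots,n\}$, $T$ contains at most one transition with round $t$ and process ID $i$. Then there exists a correct state machine $M'$ with $M'(t,i,x)=y$ for every transition $(t,i,x)\mapsto y$ in $T$.
   Context: Model. There are $n$ processes with IDs $1,\dots,n$, running for $r$ synchronous rounds, with at most $f$ crash failures. There is a finite set $I$ of initial states, a finite set $D$ of decision states, a finite set $Q$ of non-final (intermediate) states, and a special symbol $L$ ("lost message") not in any of these sets. A state machine is a function $M$ assigning to each round $t\in\{1,\dots,r\}$, process ID $i$, and input vector $x=(x_1,\dots,x_n)\in (I\cup Q\cup\{L\})^n$ a new state $M(t,i,x)$, which lies in $Q$ if $t<r$ and in $D$ if $t=r$. Scenarios. A scenario is a pair $\mathit{Sc}=(\mathit{Init},\mathit{Loss})$ with $\mathit{Init}\in I^n$ and $\mathit{Loss}\subseteq\{(j,i,t)\}$ (meaning the message from $j$ to $i$ in round $t$ is lost), consistent with at most $f$ crashes: there is a set $P$ of at most $f$ processes and a crash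 round $c_p$ for each $p\in P$ such that messages from processes not in $P$ are never lost, and for $p\in P$ messages from $p$ in rounds $t<c_p$ are never lost, all messages from $p$ in rounds $t>c_p$ are lost, and in round $c_p$ an arbitrary subset of $p$'s messages is lost. A process in $P$ is called crashed. Execution. Process $i$ starts in state $s_i^0=\mathit{Init}[i]$. In round $t=1,\dots,r$, every process broadcasts its current state; process $i$'s input vector is $x^t_i$ with $(x^t_i)_j=s_j^{t-1}$ if $(j,i,t)\notin\mathit{Loss}$ and $(x^t_i)_j=L$ otherwise; then $s_i^t=M(t,i,x_i^t)$. The final state of process $i$ is $s_i^r\in D$. Correctness. $C$ is a property of the scenario together with the final decision states; it depends only on $\mathit{Sc}$ and the final states (not on intermediate states). A state machine is correct if for every scenario consistent with the setting, its execution satisfies $C$. The setting is feasible if a correct state machine exists. A scenario $\mathit{Sc}$ leads to a definite decision if there is a vector $(d_1,\dots,d_n)\in D^n$ such that every correct state machine, executed on $\mathit{Sc}$, ends with process $i$ in state $d_i$ for all $i$. *)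

theory Defs
  imports Main
begin

(* Process IDs are 1..n, rounds 1..r.  Vectors indexed by process IDs are lists of
   length n; the entry of process i is at list position i - 1.
   States are elements of a type 's; the sets I, D, Q :: 's set are the initial,
   decision and intermediate states.  A received message is  's option, where
   None is the "lost message" symbol L (so L is automatically not a state).
   A state machine is a HOL function  M :: nat => nat => 's option list => 's
   (round, process ID, input vector); only its values on the meaningful domain
   are constrained. *)

type_synonym 's scenario = "'s list \<times> (nat \<times> nat \<times> nat) set"

type_synonym 's machine = "nat \<Rightarrow> nat \<Rightarrow> 's option list \<Rightarrow> 's"

definition valid_input :: "nat \<Rightarrow> 's set \<Rightarrow> 's set \<Rightarrow> 's option list \<Rightarrow> bool" where
  "valid_input n I Q x \<longleftrightarrow> length x = n \<and> (\<forall>v\<in>set x. v = None \<or> (\<exists>s\<in>I \<union> Q. v = Some s))"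

definition state_machine ::
  "nat \<Rightarrow> nat \<Rightarrow> 's set \<Rightarrow> 's set \<Rightarrow> 's set \<Rightarrow> 's machine \<Rightarrow> bool" where
  "state_machine n r I D Q M \<longleftrightarrow>
     (\<forall>t\<in>{1..r}. \<forall>i\<in>{1..n}. \<forall>x. valid_input n I Q x \<longrightarrow>
        M t i x \<in> (if t < r then Q else D))"

definition scenario :: "nat \<Rightarrow> nat \<Rightarrow> nat \<Rightarrow> 's set \<Rightarrow> 's scenario \<Rightarrow> bool" where
  "scenario n r f I Sc \<longleftrightarrow>
     (let Init = fst Sc; Loss = snd Sc in
      length Init = n \<and> set Init \<subseteq> I \<and>
      Loss \<subseteq> {1..n} \<times> {1..n} \<times> {1..r} \<and>
      (\<exists>(P::nat set) (c::nat \<Rightarrow> nat). P \<subseteq> {1..n} \<and> card P \<le> f \<and>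
         (\<forall>j i t. (j, i, t) \<in> Loss \<longrightarrow> j \<in> P \<and> c j \<le> t) \<and>
         (\<forall>j\<in>P. \<forall>i\<in>{1..n}. \<forall>t\<in>{1..r}. c j < t \<longrightarrow> (j, i, t) \<in> Loss)))"

(* input vector of process i in round t, given the state vector s after round t-1 *)
definition input_vec :: "nat \<Rightarrow> (nat \<times> nat \<times> nat) set \<Rightarrow> 's list \<Rightarrow> nat \<Rightarrow> nat \<Rightarrow> 's option list" where
  "input_vec n Loss s i t = map (\<lambda>j. if (j, i, t) \<in> Loss then None else Some (s ! (j - 1))) [1..<Suc n]"

fun exec :: "nat \<Rightarrow> 's machine \<Rightarrow> 's scenario \<Rightarrow> nat \<Rightarrow> 's list" where
  "exec n M Sc 0 = fst Sc"
| "exec n M Sc (Suc t) =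
     map (\<lambda>i. M (Suc t) i (input_vec n (snd Sc) (exec n M Sc t) i (Suc t))) [1..<Suc n]"

definition final_states :: "nat \<Rightarrow> nat \<Rightarrow> 's machine \<Rightarrow> 's scenario \<Rightarrow> 's list" where
  "final_states n r M Sc = exec n M Sc r"

definition correct ::
  "nat \<Rightarrow> nat \<Rightarrow> nat \<Rightarrow> 's set \<Rightarrow> 's set \<Rightarrow> 's set \<Rightarrow>
   ('s scenario \<Rightarrow> 's list \<Rightarrow> bool) \<Rightarrow> 's machine \<Rightarrow> bool" where
  "correct n r f I D Q C M \<longleftrightarrow> state_machine n r I D Q M \<and>
     (\<forall>Sc. scenario n r f I Sc \<longrightarrow> C Sc (final_states n r M Sc))"

definition feasible ::
  "nat \<Rightarrow> nat \<Rightarrow> nat \<Rightarrow> 's set \<Rightarrow> 's set \<Rightarrow> 's set \<Rightarrow>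
   ('s scenario \<Rightarrow> 's list \<Rightarrow> bool) \<Rightarrow> bool" where
  "feasible n r f I D Q C \<longleftrightarrow> (\<exists>M. correct n r f I D Q C M)"

definition definite_decision ::
  "nat \<Rightarrow> nat \<Rightarrow> nat \<Rightarrow> 's set \<Rightarrow> 's set \<Rightarrow> 's set \<Rightarrow>
   ('s scenario \<Rightarrow> 's list \<Rightarrow> bool) \<Rightarrow> 's scenario \<Rightarrow> 's list \<Rightarrow> bool" where
  "definite_decision n r f I D Q C Sc d \<longleftrightarrow>
     length d = n \<and> set d \<subseteq> D \<and>
     (\<forall>M. correct n r f I D Q C M \<longrightarrow> final_states n r M Sc = d)"

definition applied ::
  "nat \<Rightarrow> nat \<Rightarrow> 's machine \<Rightarrow> 's scenario \<Rightarrow> nat \<times> nat \<times> 's option list \<times> 's \<Rightarrow> bool" where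
  "applied n r M Sc tr \<longleftrightarrow>
     (case tr of (t, i, x, y) \<Rightarrow>
        t \<in> {1..r} \<and> i \<in> {1..n} \<and>
        x = input_vec n (snd Sc) (exec n M Sc (t - 1)) i t \<and> M t i x = y)"

end

theory Submission
  imports Defs "HOL-Combinatorics.Transposition"
begin

(* Take any correct machine M0.  Relabelling the intermediate states of a machine,
   separately for every round and process, by involutions of Q preserves correctness:
   the relabelled machine undoes the renaming on what it receives, so its execution on
   every scenario is the relabelled execution of M0, with the same final states.
   Choosing as relabelling, for round t < r and process i, the transposition of the
   states of M0 and of M after round t on Sc makes the execution on Sc coincide with
   that of M in all intermediate rounds; in the final round both end in the definite
   decision.  Hence every transition applied by M on Sc is also one of the new machine. *)

lemma length_input_vec [simp]: "length (input_vec n L s i t) = n"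
  by (simp add: input_vec_def)

lemma nth_input_vec:
  "k < n \<Longrightarrow> input_vec n L s i t ! k = (if (Suc k, i, t) \<in> L then None else Some (s ! k))"
  by (simp add: input_vec_def del: upt_Suc)

lemma length_exec: "length (fst Sc) = n \<Longrightarrow> length (exec n M Sc t) = n"
  by (cases t) auto

lemma exec_Suc_nth:
  "i \<in> {1..n} \<Longrightarrow>
   exec n M Sc (Suc t) ! (i - 1) = M (Suc t) i (input_vec n (snd Sc) (exec n M Sc t) i (Suc t))"
  by (auto simp del: upt_Suc)

lemma valid_input_input_vec:
  assumes "\<And>k. k < n \<Longrightarrow> s ! k \<in> I \<union> Q"
  shows "valid_input n I Q (input_vec n L s i t)"
  unfolding valid_input_def
proof (intro conjI ballI)
  fix v assume "v \<in> set (input_vec n L s i t)"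
  then obtain k where "k < n" "v = input_vec n L s i t ! k"
    by (auto simp: in_set_conv_nth)
  then show "v = None \<or> (\<exists>s\<in>I \<union> Q. v = Some s)"
    using assms by (simp add: nth_input_vec)
qed simp

lemma exec_nth_in_states:
  assumes sm: "state_machine n r I D Q M" and sc: "scenario n r f I Sc"
    and "t \<le> r" and "k < n"
  shows "exec n M Sc t ! k \<in> (if t = 0 then I else if t < r then Q else D)"
  using assms(3,4)
proof (induction t arbitrary: k)
  case 0
  then show ?case using sc by (auto simp: scenario_def Let_def)
next
  case (Suc t)
  have "exec n M Sc t ! j \<in> I \<union> Q" if "j < n" for j
    using Suc.IH[OF _ that] Suc.prems by (auto split: if_splits)
  then have "valid_input n I Q (input_vec n (snd Sc) (exec n M Sc t) (Suc k) (Suc t))"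
    by (rule valid_input_input_vec)
  then have "M (Suc t) (Suc k) (input_vec n (snd Sc) (exec n M Sc t) (Suc k) (Suc t))
               \<in> (if Suc t < r then Q else D)"
    using sm Suc.prems unfolding state_machine_def by auto
  then show ?case using Suc.prems by (simp del: upt_Suc)
qed

(* e t i renames the state of process i after round t; received states are renamed back
   with e itself, which is why the lemmas below require every e t i to be an involution. *)
definition relabel_input :: "(nat \<Rightarrow> 's \<Rightarrow> 's) \<Rightarrow> 's option list \<Rightarrow> 's option list" where
  "relabel_input g x = map (\<lambda>k. map_option (g (Suc k)) (x ! k)) [0..<length x]"

definition relabel :: "(nat \<Rightarrow> nat \<Rightarrow> 's \<Rightarrow> 's) \<Rightarrow> 's machine \<Rightarrow> 's machine" where
  "relabel e M t i x = e t i (M t i (relabel_input (e (t - 1)) x))"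

lemma exec_relabel:
  assumes involution: "\<And>t i s. e t i (e t i s) = s" and initial: "\<And>i s. e 0 i s = s"
    and "length (fst Sc) = n"
  shows "exec n (relabel e M) Sc t = map (\<lambda>i. e t i (exec n M Sc t ! (i - 1))) [1..<Suc n]"
proof (induction t)
  case 0
  show ?case using assms(3) by (auto simp: initial intro!: nth_equalityI simp del: upt_Suc)
next
  case (Suc t)
  have "relabel_input (e t) (input_vec n (snd Sc) (exec n (relabel e M) Sc t) i (Suc t))
          = input_vec n (snd Sc) (exec n M Sc t) i (Suc t)" for i
    unfolding Suc relabel_input_def
    by (auto simp: nth_input_vec involution intro!: nth_equalityI simp del: upt_Suc)
  then show ?case by (auto simp: relabel_def[of e M "Suc t"] simp del: upt_Suc)
qed

lemma final_states_relabel: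
  assumes "\<And>t i s. e t i (e t i s) = s" and "\<And>i s. e 0 i s = s" and "\<And>i s. e r i s = s"
    and "length (fst Sc) = n"
  shows "final_states n r (relabel e M) Sc = final_states n r M Sc"
  unfolding final_states_def exec_relabel[of e, OF assms(1,2,4)] assms(3)
  using length_exec[OF assms(4), of M r] by (auto intro!: nth_equalityI simp del: upt_Suc)

lemma valid_input_relabel_input:
  assumes "valid_input n I Q x" and "\<And>i s. s \<in> I \<union> Q \<Longrightarrow> g i s \<in> I \<union> Q"
  shows "valid_input n I Q (relabel_input g x)"
  unfolding valid_input_def
proof (intro conjI ballI)
  show "length (relabel_input g x) = n"
    using assms(1) by (simp add: relabel_input_def valid_input_def)
  fix v assume "v \<in> set (relabel_input g x)"
  then obtain k where k: "k < length x" "v = map_option (g (Suc k)) (x ! k)"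
    by (auto simp: relabel_input_def)
  have "x ! k = None \<or> (\<exists>s\<in>I \<union> Q. x ! k = Some s)"
    using assms(1) k(1) nth_mem unfolding valid_input_def by blast
  then show "v = None \<or> (\<exists>s\<in>I \<union> Q. v = Some s)" using k(2) assms(2) by auto
qed

lemma state_machine_relabel:
  assumes "state_machine n r I D Q M"
    and Q_closed: "\<And>t i s. s \<in> Q \<Longrightarrow> e t i s \<in> Q"
    and fixes_non_Q: "\<And>t i s. s \<notin> Q \<Longrightarrow> e t i s = s"
    and final: "\<And>i s. e r i s = s"
  shows "state_machine n r I D Q (relabel e M)"
  unfolding state_machine_def
proof (intro ballI allI impI)
  fix t i x assume t: "t \<in> {1..r}" and i: "i \<in> {1..n}" and "valid_input n I Q x"
  moreover have "e t i s \<in> I \<union> Q" if "s \<in> I \<union> Q" for t i s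
    using that Q_closed fixes_non_Q by (cases "s \<in> Q") auto
  ultimately have "valid_input n I Q (relabel_input (e (t - 1)) x)"
    using valid_input_relabel_input by blast
  then have "M t i (relabel_input (e (t - 1)) x) \<in> (if t < r then Q else D)"
    using assms(1) t i unfolding state_machine_def by blast
  then show "relabel e M t i x \<in> (if t < r then Q else D)"
    using Q_closed final t by (auto simp: relabel_def split: if_splits)
qed

lemma correct_relabel:
  assumes "correct n r f I D Q C M"
    and "\<And>t i s. e t i (e t i s) = s" and "\<And>i s. e 0 i s = s" and "\<And>i s. e r i s = s"
    and "\<And>t i s. s \<in> Q \<Longrightarrow> e t i s \<in> Q" and "\<And>t i s. s \<notin> Q \<Longrightarrow> e t i s = s"
  shows "correct n r f I D Q C (relabel e M)"
  unfolding correct_def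
proof (intro conjI allI impI)
  show "state_machine n r I D Q (relabel e M)"
    using assms(1,4-6) by (simp add: correct_def state_machine_relabel)
  fix Sc assume sc: "scenario n r f I Sc"
  then have "final_states n r (relabel e M) Sc = final_states n r M Sc"
    using assms(2-4) by (simp add: final_states_relabel scenario_def Let_def)
  moreover have "C Sc (final_states n r M Sc)"
    using assms(1) sc unfolding correct_def by blast
  ultimately show "C Sc (final_states n r (relabel e M) Sc)"
    by simp
qed

lemma correct_machine_with_same_execution:
  assumes "feasible n r f I D Q C" and sc: "scenario n r f I Sc"
    and "definite_decision n r f I D Q C Sc d"
    and sm: "state_machine n r I D Q M" and "final_states n r M Sc = d"
  obtains M' where "correct n r f I D Q C M'" and "\<And>t. t \<le> r \<Longrightarrow> exec n M' Sc t = exec n M Sc t"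
proof -
  obtain M0 where M0: "correct n r f I D Q C M0"
    using assms(1) unfolding feasible_def by blast
  have len: "length (fst Sc) = n"
    using sc by (simp add: scenario_def Let_def)
  define e where "e t i = (if t \<in> {1..<r} \<and> i \<in> {1..n}
    then Transposition.transpose (exec n M0 Sc t ! (i - 1)) (exec n M Sc t ! (i - 1)) else id)"
    for t i
  have intermediate: "exec n M0 Sc t ! (i - 1) \<in> Q \<and> exec n M Sc t ! (i - 1) \<in> Q"
    if "t \<in> {1..<r}" "i \<in> {1..n}" for t i
    using exec_nth_in_states[OF sm sc, of t "i - 1"] that
      exec_nth_in_states[OF _ sc, where M = M0 and t = t and k = "i - 1"] M0
    by (auto simp: correct_def)
  have involution: "e t i (e t i s) = s" and initial: "e 0 i s = s" for t i s
    by (simp_all add: e_def)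
  have "correct n r f I D Q C (relabel e M0)"
  proof (rule correct_relabel[where e = e, OF M0 involution initial])
    show "e t i s \<in> Q" if "s \<in> Q" for t i s
      using that intermediate[of t i] by (auto simp: e_def transpose_def)
    show "e t i s = s" if "s \<notin> Q" for t i s
      using that intermediate[of t i] by (auto simp: e_def transpose_def)
  qed (simp_all add: e_def)
  moreover have "exec n (relabel e M0) Sc t = exec n M Sc t" if t: "t \<le> r" for t
  proof -
    consider "t = 0" | "t \<in> {1..<r}" | "t = r"
      using t by fastforce
    then show ?thesis
    proof cases
      case 2
      then show ?thesis
        unfolding exec_relabel[where e = e, OF involution initial len] using length_exec[OF len, of M t]
        by (auto simp: e_def intro!: nth_equalityI simp del: upt_Suc)
    next
      case 3
      then show ?thesis
        using \<open>correct n r f I D Q C (relabel e M0)\<close> assms(3,5)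
        by (simp add: definite_decision_def final_states_def)
    qed simp
  qed
  ultimately show thesis by (rule that)
qed

lemma applied_by_machine_with_same_execution:
  assumes "applied n r M Sc (t, i, x, y)"
    and same: "\<And>t. t \<le> r \<Longrightarrow> exec n M' Sc t = exec n M Sc t"
  shows "M' t i x = y"
proof -
  obtain t' where t: "t = Suc t'" "t \<le> r" and i: "i \<in> {1..n}"
    and x: "x = input_vec n (snd Sc) (exec n M Sc t') i t" and y: "M t i x = y"
    using assms(1) unfolding applied_def by (cases t) auto
  have "M' t i x = exec n M' Sc t ! (i - 1)"
    using exec_Suc_nth[OF i, of M' Sc t'] same[of t'] t x by (simp del: exec.simps)
  also have "\<dots> = exec n M Sc t ! (i - 1)"
    by (simp only: same[OF t(2)])
  also have "\<dots> = y"
    using exec_Suc_nth[OF i, of M Sc t'] t x y by (simp del: exec.simps)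
  finally show ?thesis .
qed

theorem theorem2:
  fixes n r f :: nat
    and I D Q :: "'s set"
    and C :: "'s scenario \<Rightarrow> 's list \<Rightarrow> bool"
    and Sc :: "'s scenario"
    and d :: "'s list"
    and M :: "'s machine"
    and T :: "(nat \<times> nat \<times> 's option list \<times> 's) set"
  assumes "finite I" and "finite D" and "finite Q"
    and "r \<ge> 2"
    and "feasible n r f I D Q C"
    and "scenario n r f I Sc"
    and "definite_decision n r f I D Q C Sc d"
    and "state_machine n r I D Q M"
    and "final_states n r M Sc = d"
    and "\<forall>tr\<in>T. applied n r M Sc tr"
    and "\<forall>a\<in>T. \<forall>b\<in>T. fst a = fst b \<and> fst (snd a) = fst (snd b) \<longrightarrow> a = b"
  shows "\<exists>M'. correct n r f I D Q C M' \<and>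
           (\<forall>(t, i, x, y)\<in>T. M' t i x = y)"
proof -
  obtain M' where "correct n r f I D Q C M'"
    and same: "\<And>t. t \<le> r \<Longrightarrow> exec n M' Sc t = exec n M Sc t"
    using correct_machine_with_same_execution assms(5-9) by blast
  moreover have "M' t i x = y" if "(t, i, x, y) \<in> T" for t i x y
    using applied_by_machine_with_same_execution[OF _ same] assms(10) that by blast
  ultimately show ?thesis by blast
qed

end
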